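(* For every two-player stage game $G$: if $G\in\mathcal{G}_{LS}^{m,p}$ then $G\in\mathcal{G}_{LS}^{m,m}$; that is, $\mathcal{G}_{LS}^{m,p}\subseteq\mathcal{G}_{LS}^{m,m}$.
   Context: A two-player stage game $G$ has finite nonempty action sets $A_1,A_2$ and payoffs $u_1,u_2:A_1\times A_2\to\mathbb{R}$, extended to mixed strategies by expectation. $G(T)$ is the $T$-round repetition with realized actions observed each round and payoffs the expected sum of stage payoffs; an SPE of $G(T)$ is a strategy profile whose continuation after every history of length $k<T$ is a Nash equilibrium of $G(T-k)$. Regimes: pure-pure ($p,p$): both players restricted to actions (in the stage game and in every round, including deviations); mixed-pure ($m,p$): player 1 may mix, player 2 uses only actions; mixed-mixed ($m,m$): both may mix. For regime $r$, $\mathrm{Nash}^r(G)$ is the set of stage-game profiles available in $r$ from which no player can profitably deviate unilaterally to a strategy available in $r$. Locally suboptimal behavior occurs in an SPE $\mu$ of $G(T)$ (regime $r$) if for some history $h$ of length $k<T$, $(\mu_1(h),\mu_2(h))\notin\mathrm{Nash}^r(G)$. $\mathcal{G}_{LS}^r$ is the set of stage games $G$ for which there exist $T\ge1$ and an SPE of $G(T)$ in regime $r$ in which locally suboptimal behavior occurs. *)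

theory Defs
  imports Main "HOL-Library.Indicator_Function" Complex_Main
begin

text \<open>Stage game: action sets A1, A2 (finite, nonempty; assumed in the theorem)
  and payoffs u1, u2 : A1 x A2 -> real.\<close>

definition mixed_strategy :: "'a set \<Rightarrow> ('a \<Rightarrow> real) \<Rightarrow> bool" where
  "mixed_strategy A \<sigma> \<longleftrightarrow> (\<forall>x. 0 \<le> \<sigma> x) \<and> (\<forall>x. x \<notin> A \<longrightarrow> \<sigma> x = 0) \<and> sum \<sigma> A = 1"

definition pure_strategy :: "'a set \<Rightarrow> ('a \<Rightarrow> real) \<Rightarrow> bool" where
  "pure_strategy A \<sigma> \<longleftrightarrow> (\<exists>a\<in>A. \<sigma> = (\<lambda>x. if x = a then 1 else 0))"

definition available :: "bool \<Rightarrow> 'a set \<Rightarrow> ('a \<Rightarrow> real) \<Rightarrow> bool" where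
  "available m A \<sigma> \<longleftrightarrow> (if m then mixed_strategy A \<sigma> else pure_strategy A \<sigma>)"

text \<open>A regime is a pair (player 1 may mix, player 2 may mix).\<close>
type_synonym regime = "bool \<times> bool"

definition regime_pp :: regime where "regime_pp = (False, False)"
definition regime_mp :: regime where "regime_mp = (True, False)"
definition regime_mm :: regime where "regime_mm = (True, True)"

definition EU :: "'a set \<Rightarrow> 'b set \<Rightarrow> ('a \<Rightarrow> 'b \<Rightarrow> real) \<Rightarrow> ('a \<Rightarrow> real) \<Rightarrow> ('b \<Rightarrow> real) \<Rightarrow> real" where
  "EU A1 A2 u \<sigma>1 \<sigma>2 = (\<Sum>a\<in>A1. \<Sum>b\<in>A2. \<sigma>1 a * \<sigma>2 b * u a b)"

definition stage_nash :: "regime \<Rightarrow> 'a set \<Rightarrow> 'b set \<Rightarrow> ('a \<Rightarrow> 'b \<Rightarrow> real) \<Rightarrow> ('a \<Rightarrow> 'b \<Rightarrow> real)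
    \<Rightarrow> ('a \<Rightarrow> real) \<Rightarrow> ('b \<Rightarrow> real) \<Rightarrow> bool" where
  "stage_nash r A1 A2 u1 u2 \<sigma>1 \<sigma>2 \<longleftrightarrow>
     available (fst r) A1 \<sigma>1 \<and> available (snd r) A2 \<sigma>2 \<and>
     (\<forall>\<tau>1. available (fst r) A1 \<tau>1 \<longrightarrow> EU A1 A2 u1 \<tau>1 \<sigma>2 \<le> EU A1 A2 u1 \<sigma>1 \<sigma>2) \<and>
     (\<forall>\<tau>2. available (snd r) A2 \<tau>2 \<longrightarrow> EU A1 A2 u2 \<sigma>1 \<tau>2 \<le> EU A1 A2 u2 \<sigma>1 \<sigma>2)"

definition rstrategy :: "bool \<Rightarrow> 'a set \<Rightarrow> (('a \<times> 'b) list \<Rightarrow> 'a \<Rightarrow> real) \<Rightarrow> bool" where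
  "rstrategy m A s \<longleftrightarrow> (\<forall>h. available m A (s h))"

definition rstrategy2 :: "bool \<Rightarrow> 'b set \<Rightarrow> (('a \<times> 'b) list \<Rightarrow> 'b \<Rightarrow> real) \<Rightarrow> bool" where
  "rstrategy2 m A s \<longleftrightarrow> (\<forall>h. available m A (s h))"

fun cont_value :: "'a set \<Rightarrow> 'b set \<Rightarrow> ('a \<Rightarrow> 'b \<Rightarrow> real) \<Rightarrow> (('a \<times> 'b) list \<Rightarrow> 'a \<Rightarrow> real)
    \<Rightarrow> (('a \<times> 'b) list \<Rightarrow> 'b \<Rightarrow> real) \<Rightarrow> ('a \<times> 'b) list \<Rightarrow> nat \<Rightarrow> real" where
  "cont_value A1 A2 u s1 s2 h 0 = 0"
| "cont_value A1 A2 u s1 s2 h (Suc n) =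
     (\<Sum>a\<in>A1. \<Sum>b\<in>A2. s1 h a * s2 h b * (u a b + cont_value A1 A2 u s1 s2 (h @ [(a, b)]) n))"

text \<open>SPE of G(T) in regime r: after every (valid) history of length k < T,
  the continuation is a Nash equilibrium of G(T-k).\<close>
definition is_SPE :: "regime \<Rightarrow> 'a set \<Rightarrow> 'b set \<Rightarrow> ('a \<Rightarrow> 'b \<Rightarrow> real) \<Rightarrow> ('a \<Rightarrow> 'b \<Rightarrow> real) \<Rightarrow> nat
    \<Rightarrow> (('a \<times> 'b) list \<Rightarrow> 'a \<Rightarrow> real) \<Rightarrow> (('a \<times> 'b) list \<Rightarrow> 'b \<Rightarrow> real) \<Rightarrow> bool" where
  "is_SPE r A1 A2 u1 u2 T s1 s2 \<longleftrightarrow>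
     rstrategy (fst r) A1 s1 \<and> rstrategy2 (snd r) A2 s2 \<and>
     (\<forall>h. set h \<subseteq> A1 \<times> A2 \<and> length h < T \<longrightarrow>
        (\<forall>t1. rstrategy (fst r) A1 t1 \<longrightarrow>
           cont_value A1 A2 u1 t1 s2 h (T - length h) \<le> cont_value A1 A2 u1 s1 s2 h (T - length h)) \<and>
        (\<forall>t2. rstrategy2 (snd r) A2 t2 \<longrightarrow>
           cont_value A1 A2 u2 s1 t2 h (T - length h) \<le> cont_value A1 A2 u2 s1 s2 h (T - length h)))"

definition in_G_LS :: "regime \<Rightarrow> 'a set \<Rightarrow> 'b set \<Rightarrow> ('a \<Rightarrow> 'b \<Rightarrow> real) \<Rightarrow> ('a \<Rightarrow> 'b \<Rightarrow> real) \<Rightarrow> bool" where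
  "in_G_LS r A1 A2 u1 u2 \<longleftrightarrow>
     (\<exists>T \<ge> 1. \<exists>s1 s2. is_SPE r A1 A2 u1 u2 T s1 s2 \<and>
        (\<exists>h. set h \<subseteq> A1 \<times> A2 \<and> length h < T \<and> \<not> stage_nash r A1 A2 u1 u2 (s1 h) (s2 h)))"

end

theory Submission
  imports Defs
begin

text \<open>Once player 1's (possibly mixed) strategy is fixed, player 2 faces a
  decision problem. A mixed deviation of player 2 at a history is then worth a
  convex combination of the continuations "play action b now and follow the
  equilibrium afterwards"; these are pure deviations, hence unprofitable, so by
  backward induction no mixed deviation is profitable either. Thus an SPE of the
  mixed-pure regime remains an SPE when player 2 may mix, and since player 2's
  equilibrium play is pure, a stage profile that is not Nash in the mixed-pure
  regime is not Nash in the mixed-mixed one.\<close>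

lemma pure_imp_mixed_strategy:
  "finite A \<Longrightarrow> pure_strategy A \<sigma> \<Longrightarrow> mixed_strategy A \<sigma>"
  unfolding pure_strategy_def mixed_strategy_def by auto

lemma available_imp_mixed_strategy:
  "finite A \<Longrightarrow> available m A \<sigma> \<Longrightarrow> mixed_strategy A \<sigma>"
  by (auto simp: available_def pure_imp_mixed_strategy split: if_splits)

lemma available_mono:
  "finite A \<Longrightarrow> available m A \<sigma> \<Longrightarrow> available True A \<sigma>"
  using available_imp_mixed_strategy by (simp add: available_def)

lemma cont_value_cong_future:
  assumes "\<And>g. length h \<le> length g \<Longrightarrow> t g = s g"
  shows "cont_value A1 A2 u s1 t h n = cont_value A1 A2 u s1 s h n"
  using assms
proof (induction n arbitrary: h)
  case 0
  then show ?case by simp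
next
  case (Suc n)
  have "cont_value A1 A2 u s1 t (h @ [(a, b)]) n = cont_value A1 A2 u s1 s (h @ [(a, b)]) n"
    for a b by (rule Suc.IH) (simp add: Suc.prems)
  then show ?case by (simp add: Suc.prems)
qed

lemma cont_value_Suc_pure_deviation:
  assumes "finite A2" and "b \<in> A2"
  shows "cont_value A1 A2 u s1 (s2(h := (\<lambda>x. if x = b then 1 else 0))) h (Suc n)
       = (\<Sum>a\<in>A1. s1 h a * (u a b + cont_value A1 A2 u s1 s2 (h @ [(a, b)]) n))"
proof -
  let ?t = "s2(h := (\<lambda>x. if x = b then 1 else 0))"
  have future: "cont_value A1 A2 u s1 ?t (h @ [(a, b')]) n = cont_value A1 A2 u s1 s2 (h @ [(a, b')]) n"
    for a b' by (rule cont_value_cong_future) auto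
  have "cont_value A1 A2 u s1 ?t h (Suc n)
      = (\<Sum>a\<in>A1. \<Sum>b'\<in>A2. if b' = b then s1 h a * (u a b' + cont_value A1 A2 u s1 s2 (h @ [(a, b')]) n) else 0)"
    by (simp add: future) (intro sum.cong refl, simp)
  then show ?thesis
    using assms by (simp add: sum.delta')
qed

lemma mixed_deviation_unprofitable:
  assumes fin: "finite A1" "finite A2"
    and s1: "rstrategy m1 A1 s1" and s2: "rstrategy2 False A2 s2"
    and pure_unprofitable: "\<And>g t. set g \<subseteq> A1 \<times> A2 \<Longrightarrow> length g < T \<Longrightarrow> rstrategy2 False A2 t \<Longrightarrow>
        cont_value A1 A2 u s1 t g (T - length g) \<le> cont_value A1 A2 u s1 s2 g (T - length g)"
    and t2: "rstrategy2 True A2 t2"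
    and "set h \<subseteq> A1 \<times> A2" and "length h + n = T"
  shows "cont_value A1 A2 u s1 t2 h n \<le> cont_value A1 A2 u s1 s2 h n"
  using assms(6-)
proof (induction n arbitrary: h)
  case 0
  then show ?case by simp
next
  case (Suc n)
  let ?C = "\<lambda>a b. cont_value A1 A2 u s1 s2 (h @ [(a, b)]) n"
  define V where "V = cont_value A1 A2 u s1 s2 h (Suc n)"
  have IH: "cont_value A1 A2 u s1 t2 (h @ [(a, b)]) n \<le> ?C a b" if "a \<in> A1" "b \<in> A2" for a b
    using Suc that by auto
  have s1_nonneg: "0 \<le> s1 h a" for a
    using s1 fin(1) available_imp_mixed_strategy by (fastforce simp: rstrategy_def mixed_strategy_def)
  have t2_nonneg: "0 \<le> t2 h b" and t2_sum: "sum (t2 h) A2 = 1" for b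
    using t2 by (simp_all add: rstrategy2_def available_def mixed_strategy_def)
  have pure_step: "(\<Sum>a\<in>A1. s1 h a * (u a b + ?C a b)) \<le> V" if "b \<in> A2" for b
  proof -
    have "rstrategy2 False A2 (s2(h := (\<lambda>x. if x = b then 1 else 0)))"
      using s2 that by (auto simp: rstrategy2_def available_def pure_strategy_def)
    then have "cont_value A1 A2 u s1 (s2(h := (\<lambda>x. if x = b then 1 else 0))) h (Suc n) \<le> V"
      using pure_unprofitable[of h] Suc.prems unfolding V_def
      by (metis add_Suc_right add_diff_cancel_left' less_add_Suc1)
    then show ?thesis
      unfolding cont_value_Suc_pure_deviation[OF fin(2) that] .
  qed
  have "cont_value A1 A2 u s1 t2 h (Suc n)
      \<le> (\<Sum>a\<in>A1. \<Sum>b\<in>A2. s1 h a * t2 h b * (u a b + ?C a b))"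
    by (simp, intro sum_mono mult_left_mono add_left_mono IH mult_nonneg_nonneg s1_nonneg t2_nonneg)
  also have "\<dots> = (\<Sum>b\<in>A2. t2 h b * (\<Sum>a\<in>A1. s1 h a * (u a b + ?C a b)))"
    by (subst sum.swap) (simp add: sum_distrib_left mult_ac)
  also have "\<dots> \<le> (\<Sum>b\<in>A2. t2 h b * V)"
    by (intro sum_mono mult_left_mono pure_step t2_nonneg)
  also have "\<dots> = V"
    using t2_sum by (simp add: sum_distrib_right[symmetric])
  finally show ?case by (simp add: V_def)
qed

lemma is_SPE_mp_imp_mm:
  assumes fin: "finite A1" "finite A2"
    and spe: "is_SPE regime_mp A1 A2 u1 u2 T s1 s2"
  shows "is_SPE regime_mm A1 A2 u1 u2 T s1 s2"
proof -
  have s1: "rstrategy True A1 s1" and s2: "rstrategy2 False A2 s2"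
    using spe by (auto simp: is_SPE_def regime_mp_def)
  have pure_unprofitable: "\<And>g t. set g \<subseteq> A1 \<times> A2 \<Longrightarrow> length g < T \<Longrightarrow> rstrategy2 False A2 t \<Longrightarrow>
      cont_value A1 A2 u2 s1 t g (T - length g) \<le> cont_value A1 A2 u2 s1 s2 g (T - length g)"
    using spe by (auto simp: is_SPE_def regime_mp_def)
  have "rstrategy2 True A2 s2"
    using s2 available_mono[OF fin(2), of False] by (simp add: rstrategy2_def)
  moreover have "cont_value A1 A2 u2 s1 t2 h (T - length h) \<le> cont_value A1 A2 u2 s1 s2 h (T - length h)"
    if "set h \<subseteq> A1 \<times> A2" "length h < T" "rstrategy2 True A2 t2" for h t2
    using mixed_deviation_unprofitable[OF fin s1 s2 pure_unprofitable that(3) that(1)] that(2) by simp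
  ultimately show ?thesis
    using spe by (auto simp: is_SPE_def regime_mp_def regime_mm_def)
qed

lemma stage_nash_mm_imp_mp:
  assumes "finite A2" and "available False A2 \<sigma>2"
    and "stage_nash regime_mm A1 A2 u1 u2 \<sigma>1 \<sigma>2"
  shows "stage_nash regime_mp A1 A2 u1 u2 \<sigma>1 \<sigma>2"
  using assms available_mono[OF assms(1)]
  by (auto simp: stage_nash_def regime_mp_def regime_mm_def)

theorem mainTheorem13:
  fixes A1 :: "'a set" and A2 :: "'b set" and u1 u2 :: "'a \<Rightarrow> 'b \<Rightarrow> real"
  assumes "finite A1" and "A1 \<noteq> {}" and "finite A2" and "A2 \<noteq> {}"
    and "in_G_LS regime_mp A1 A2 u1 u2"
  shows "in_G_LS regime_mm A1 A2 u1 u2"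
proof -
  obtain T s1 s2 h where "T \<ge> 1" and spe: "is_SPE regime_mp A1 A2 u1 u2 T s1 s2"
    and "set h \<subseteq> A1 \<times> A2" "length h < T"
    and not_nash: "\<not> stage_nash regime_mp A1 A2 u1 u2 (s1 h) (s2 h)"
    using assms(5) unfolding in_G_LS_def by blast
  have "available False A2 (s2 h)"
    using spe by (simp add: is_SPE_def regime_mp_def rstrategy2_def)
  then have "\<not> stage_nash regime_mm A1 A2 u1 u2 (s1 h) (s2 h)"
    using stage_nash_mm_imp_mp[OF assms(3)] not_nash by blast
  moreover have "is_SPE regime_mm A1 A2 u1 u2 T s1 s2"
    using is_SPE_mp_imp_mm[OF assms(1,3) spe] .
  ultimately show ?thesis
    unfolding in_G_LS_def using \<open>T \<ge> 1\<close> \<open>set h \<subseteq> A1 \<times> A2\<close> \<open>length h < T\<close> by blast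
qed

end
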